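(* Let $x_v\geq0$ for $v\in\Lambda_N$ and let $\check h_v=h_v+x_v$ for $v\in\Lambda_N$. Then with probability 1, for every $v\in\mathcal C^{\Lambda_N}\cap\check{\mathcal C}^{\Lambda_N}$ there is a nearest-neighbor path in $\mathcal C^{\Lambda_N}\cap\check{\mathcal C}^{\Lambda_N}$ joining $v$ and $\partial\Lambda_N$ (i.e. starting at $v$ and ending at a vertex adjacent to $\partial\Lambda_N$).
   Context: Let $\{h_v:v\in\mathbb Z^2\}$ be i.i.d. Gaussian with mean zero and variance $\epsilon^2>0$. Write $u\sim v$ if $|u-v|_1=1$; $\partial A=\{v\in\mathbb Z^2\setminus A:u\sim v\text{ for some }u\in A\}$; $\Lambda_N=\{v\in\mathbb Z^2:|v|_\infty\le N\}$. For a field $g$ on $\Lambda_N$ and $\sigma\in\{-1,1\}^{\Lambda_N}$, $H^{\Lambda_N,\pm}_g(\sigma)=-\big(\sum_{u\sim v,\,u,v\in\Lambda_N}\sigma_u\sigma_v\pm\sum_{u\sim v,\,u\in\Lambda_N,v\in\partial\Lambda_N}\sigma_u+\sum_{u\in\Lambda_N}\sigma_ug_u\big)$ (each unordered pair counted once); $\sigma^{\Lambda_N,\pm}$ and $\check\sigma^{\Lambda_N,\pm}$ are the ground states (minimizers) for $g=h$ and $g=\check h$ respectively (unique a.s.). $\mathcal C^{\Lambda_N}=\{v:\sigma^{\Lambda_N,+}_v=1,\sigma^{\Lambda_N,-}_v=-1\}$ and $\check{\mathcal C}^{\Lambda_N}=\{v:\check\sigma^{\Lambda_N,+}_v=1,\check\sigma^{\Lambda_N,-}_v=-1\}$.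 *)

theory Defs
  imports "HOL-Probability.Probability"
begin

type_synonym site = "int \<times> int"

definition nn :: "site \<Rightarrow> site \<Rightarrow> bool" where
  "nn u v \<longleftrightarrow> \<bar>fst u - fst v\<bar> + \<bar>snd u - snd v\<bar> = 1"

definition Lambda :: "nat \<Rightarrow> site set" where
  "Lambda N = {v. \<bar>fst v\<bar> \<le> int N \<and> \<bar>snd v\<bar> \<le> int N}"

definition bdry :: "site set \<Rightarrow> site set" where
  "bdry A = {v. v \<notin> A \<and> (\<exists>u\<in>A. nn u v)}"

definition configs :: "nat \<Rightarrow> (site \<Rightarrow> real) set" where
  "configs N = {\<sigma>. (\<forall>v\<in>Lambda N. \<sigma> v = 1 \<or> \<sigma> v = -1) \<and> (\<forall>v. v \<notin> Lambda N \<longrightarrow> \<sigma> v = 0)}"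

text \<open>Hamiltonian with boundary condition s (s = 1 for plus, s = -1 for minus).
  Each unordered pair u ~ v inside Lambda N is counted once (the ordered double sum is halved).\<close>
definition Ham :: "nat \<Rightarrow> real \<Rightarrow> (site \<Rightarrow> real) \<Rightarrow> (site \<Rightarrow> real) \<Rightarrow> real" where
  "Ham N s g \<sigma> = - ((1/2) * (\<Sum>u\<in>Lambda N. \<Sum>v\<in>{v\<in>Lambda N. nn u v}. \<sigma> u * \<sigma> v)
        + s * (\<Sum>u\<in>Lambda N. \<Sum>v\<in>{v\<in>bdry (Lambda N). nn u v}. \<sigma> u)
        + (\<Sum>u\<in>Lambda N. \<sigma> u * g u))"

definition ground_state :: "nat \<Rightarrow> real \<Rightarrow> (site \<Rightarrow> real) \<Rightarrow> (site \<Rightarrow> real) \<Rightarrow> bool" where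
  "ground_state N s g \<sigma> \<longleftrightarrow> \<sigma> \<in> configs N \<and> (\<forall>\<tau>\<in>configs N. Ham N s g \<sigma> \<le> Ham N s g \<tau>)"

definition disagree :: "nat \<Rightarrow> (site \<Rightarrow> real) \<Rightarrow> (site \<Rightarrow> real) \<Rightarrow> site set" where
  "disagree N sp sm = {v\<in>Lambda N. sp v = 1 \<and> sm v = -1}"

definition path_to_bdry :: "site set \<Rightarrow> site set \<Rightarrow> site \<Rightarrow> site list \<Rightarrow> bool" where
  "path_to_bdry A S v p \<longleftrightarrow> p \<noteq> [] \<and> hd p = v \<and> set p \<subseteq> S
     \<and> (\<forall>i. Suc i < length p \<longrightarrow> nn (p ! i) (p ! Suc i))
     \<and> (\<exists>w\<in>bdry A. nn (last p) w)"

definition field_law :: "nat \<Rightarrow> real \<Rightarrow> (site \<Rightarrow> real) measure" where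
  "field_law N eps = Pi\<^sub>M (Lambda N) (\<lambda>_. density lborel (normal_density 0 eps))"

end

(* Almost surely no two spin configurations have equal energy, because the energy difference
   is a non-trivial linear form in the Gaussian field; so ground states are unique, and the
   min/max exchange shows that they are monotone in the external field: sp <= cp, sm <= cm.
   Let A be the cluster of v in the common disagreement set. If A did not touch the boundary,
   setting sp to -1 and cm to +1 on A would not increase H^+_h(sp) + H^-_(h+x)(cm): bonds
   inside A are unchanged, a bond to an outside neighbour z does not get worse since
   sp z <= cm z (otherwise z would lie in A by monotonicity), and the field terms gain 2x >= 0.
   Uniqueness of the plus ground state then forces the flip to be trivial, contradicting v in A. *)

theory Submission
  imports Defs
begin

lemma null_sets_density_singleton:
  fixes f :: "real \<Rightarrow> ennreal"
  assumes "f \<in> borel_measurable borel"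
  shows "{a} \<in> null_sets (density lborel f)"
  using assms by (simp add: null_sets_density_iff frequently_def AE_lborel_singleton)

lemma AE_PiM_linear_form_neq:
  fixes M :: "'i \<Rightarrow> real measure" and c :: "'i \<Rightarrow> real"
  assumes "product_sigma_finite M" and sets_M: "\<And>i. i \<in> I \<Longrightarrow> sets (M i) = sets borel"
    and "finite I" and "u \<in> I" and "c u \<noteq> 0" and atomless: "\<And>a. {a} \<in> null_sets (M u)"
  shows "AE h in Pi\<^sub>M I M. (\<Sum>i\<in>I. c i * h i) \<noteq> d"
proof -
  interpret product_sigma_finite M by fact
  let ?P = "Pi\<^sub>M I M"
  let ?S = "{h \<in> space ?P. (\<Sum>i\<in>I. c i * h i) = d}"
  define J where "J = I - {u}"
  have I: "I = insert u J" "u \<notin> J" "finite J"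
    using \<open>u \<in> I\<close> \<open>finite I\<close> by (auto simp: J_def)
  have "(\<lambda>h. h i) \<in> borel_measurable ?P" if "i \<in> I" for i
    using measurable_component_singleton[OF that, of M] sets_M[OF that]
    by (simp cong: measurable_cong_sets)
  then have S: "?S \<in> sets ?P"
    by measurable
  have slice: "indicator ?S (h(u := y)) = (indicator {(d - (\<Sum>i\<in>J. c i * h i)) / c u} y :: ennreal)"
    if "h \<in> space (Pi\<^sub>M J M)" for h y
  proof -
    have "space (M u) = UNIV"
      using sets_eq_imp_space_eq[OF sets_M[OF \<open>u \<in> I\<close>]] by simp
    then have "h(u := y) \<in> space ?P"
      using that I by (auto simp: space_PiM PiE_def extensional_def)
    moreover have "(\<Sum>i\<in>I. c i * (h(u := y)) i) = c u * y + (\<Sum>i\<in>J. c i * h i)"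
      unfolding I(1) using I by (auto intro: sum.cong)
    ultimately show ?thesis
      using \<open>c u \<noteq> 0\<close> by (auto simp: indicator_def field_simps)
  qed
  have "emeasure ?P ?S = (\<integral>\<^sup>+ h. (\<integral>\<^sup>+ y. indicator ?S (h(u := y)) \<partial>M u) \<partial>Pi\<^sub>M J M)"
    using S I by (simp add: product_nn_integral_insert flip: nn_integral_indicator)
  also have "\<dots> = 0"
    using atomless
    by (simp add: slice null_setsD1 null_setsD2 cong: nn_integral_cong)
  finally show ?thesis
    using S by (intro AE_I'[of ?S]) auto
qed

lemma finite_Lambda: "finite (Lambda N)"
proof (rule finite_subset)
  show "Lambda N \<subseteq> {-int N..int N} \<times> {-int N..int N}"
    unfolding Lambda_def by (auto simp: abs_le_iff)
qed simp

lemma finite_configs: "finite (configs N)"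
proof (rule finite_subset)
  show "configs N \<subseteq> {\<sigma>. \<forall>v. (v \<in> Lambda N \<longrightarrow> \<sigma> v \<in> {1, -1}) \<and> (v \<notin> Lambda N \<longrightarrow> \<sigma> v = 0)}"
    unfolding configs_def by auto
qed (intro finite_set_of_finite_funs finite_Lambda; simp)

lemma configs_values: "\<sigma> \<in> configs N \<Longrightarrow> v \<in> Lambda N \<Longrightarrow> \<sigma> v = 1 \<or> \<sigma> v = -1"
  unfolding configs_def by auto

lemma configs_outside: "\<sigma> \<in> configs N \<Longrightarrow> v \<notin> Lambda N \<Longrightarrow> \<sigma> v = 0"
  unfolding configs_def by blast

lemma nn_sym: "nn u v \<Longrightarrow> nn v u"
  unfolding nn_def by (simp add: abs_minus_commute)

lemma Ham_eq_Ham_zero_field: "Ham N s g \<sigma> = Ham N s (\<lambda>_. 0) \<sigma> - (\<Sum>u\<in>Lambda N. \<sigma> u * g u)"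
  unfolding Ham_def by simp

lemma Ham_add_le:
  assumes bonds: "\<And>u v. u \<in> Lambda N \<Longrightarrow> v \<in> Lambda N \<Longrightarrow> nn u v \<Longrightarrow>
      c u * c v + d u * d v \<le> a u * a v + b u * b v"
    and boundary: "\<And>u w. u \<in> Lambda N \<Longrightarrow> w \<in> bdry (Lambda N) \<Longrightarrow> nn u w \<Longrightarrow>
      s1 * a u + s2 * b u = s1 * c u + s2 * d u"
    and field: "\<And>u. u \<in> Lambda N \<Longrightarrow> c u * f1 u + d u * f2 u \<le> a u * f1 u + b u * f2 u"
  shows "Ham N s1 f1 a + Ham N s2 f2 b \<le> Ham N s1 f1 c + Ham N s2 f2 d"
proof -
  let ?L = "Lambda N"
  let ?nb = "\<lambda>u. {v \<in> Lambda N. nn u v}"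
  let ?bd = "\<lambda>u. {v \<in> bdry (Lambda N). nn u v}"
  have "(\<Sum>u\<in>?L. \<Sum>v\<in>?nb u. c u * c v) + (\<Sum>u\<in>?L. \<Sum>v\<in>?nb u. d u * d v)
      \<le> (\<Sum>u\<in>?L. \<Sum>v\<in>?nb u. a u * a v) + (\<Sum>u\<in>?L. \<Sum>v\<in>?nb u. b u * b v)"
    unfolding sum.distrib[symmetric] by (intro sum_mono) (auto intro: bonds)
  moreover have "s1 * (\<Sum>u\<in>?L. \<Sum>v\<in>?bd u. a u) + s2 * (\<Sum>u\<in>?L. \<Sum>v\<in>?bd u. b u)
      = s1 * (\<Sum>u\<in>?L. \<Sum>v\<in>?bd u. c u) + s2 * (\<Sum>u\<in>?L. \<Sum>v\<in>?bd u. d u)"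
    unfolding sum_distrib_left sum.distrib[symmetric] by (intro sum.cong refl) (auto intro: boundary)
  moreover have "(\<Sum>u\<in>?L. c u * f1 u) + (\<Sum>u\<in>?L. d u * f2 u) \<le> (\<Sum>u\<in>?L. a u * f1 u) + (\<Sum>u\<in>?L. b u * f2 u)"
    unfolding sum.distrib[symmetric] by (intro sum_mono field)
  ultimately show ?thesis
    unfolding Ham_def by linarith
qed

lemma ground_state_le:
  assumes gs: "ground_state N s f \<sigma>" and gs': "ground_state N s f' \<sigma>'"
    and le: "\<And>u. u \<in> Lambda N \<Longrightarrow> f u \<le> f' u"
    and inj: "inj_on (Ham N s f) (configs N)"
  shows "\<sigma> v \<le> \<sigma>' v"
proof -
  define m where "m = (\<lambda>v. min (\<sigma> v) (\<sigma>' v))"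
  define M where "M = (\<lambda>v. max (\<sigma> v) (\<sigma>' v))"
  have \<sigma>: "\<sigma> \<in> configs N" and \<sigma>': "\<sigma>' \<in> configs N"
    using gs gs' unfolding ground_state_def by auto
  then have m: "m \<in> configs N" and M: "M \<in> configs N"
    unfolding configs_def m_def M_def by (auto simp: min_def max_def)
  have "Ham N s f m + Ham N s f' M \<le> Ham N s f \<sigma> + Ham N s f' \<sigma>'"
  proof (rule Ham_add_le)
    fix u w assume "u \<in> Lambda N" "w \<in> Lambda N"
    then show "\<sigma> u * \<sigma> w + \<sigma>' u * \<sigma>' w \<le> m u * m w + M u * M w"
      using configs_values[OF \<sigma>] configs_values[OF \<sigma>'] unfolding m_def M_def by fastforce
  next
    fix u show "s * m u + s * M u = s * \<sigma> u + s * \<sigma>' u"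
      unfolding m_def M_def by (simp add: min_def max_def)
  next
    fix u assume "u \<in> Lambda N"
    then show "\<sigma> u * f u + \<sigma>' u * f' u \<le> m u * f u + M u * f' u"
      using configs_values[OF \<sigma>] configs_values[OF \<sigma>'] le unfolding m_def M_def by fastforce
  qed
  moreover have "Ham N s f \<sigma> \<le> Ham N s f m" and "Ham N s f' \<sigma>' \<le> Ham N s f' M"
    using gs gs' m M unfolding ground_state_def by auto
  ultimately have "Ham N s f m = Ham N s f \<sigma>"
    by linarith
  with inj m \<sigma> have "m = \<sigma>"
    by (meson inj_onD)
  then show ?thesis
    unfolding m_def by (metis min.cobounded2)
qed

lemma AE_inj_on_Ham:
  assumes "eps > 0"
  shows "AE h in field_law N eps. inj_on (Ham N s h) (configs N)"
proof -
  have no_tie: "AE h in field_law N eps. Ham N s h \<sigma> \<noteq> Ham N s h \<tau>"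
    if \<sigma>: "\<sigma> \<in> configs N" and \<tau>: "\<tau> \<in> configs N" and "\<sigma> \<noteq> \<tau>" for \<sigma> \<tau>
  proof -
    obtain u where u: "\<sigma> u \<noteq> \<tau> u"
      using \<open>\<sigma> \<noteq> \<tau>\<close> by (meson ext)
    then have "u \<in> Lambda N"
      using \<sigma> \<tau> configs_outside by metis
    let ?gauss = "density lborel (normal_density 0 eps)"
    have "AE h in field_law N eps.
        (\<Sum>w\<in>Lambda N. (\<sigma> w - \<tau> w) * h w) \<noteq> Ham N s (\<lambda>_. 0) \<sigma> - Ham N s (\<lambda>_. 0) \<tau>"
      unfolding field_law_def
    proof (rule AE_PiM_linear_form_neq[OF _ _ finite_Lambda \<open>u \<in> Lambda N\<close>])
      show "product_sigma_finite (\<lambda>_. ?gauss)"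
        unfolding product_sigma_finite_def
        using prob_space_normal_density[OF \<open>eps > 0\<close>] prob_space_imp_sigma_finite by blast
    qed (use u null_sets_density_singleton in auto)
    then show ?thesis
      by eventually_elim
        (subst (1 2) Ham_eq_Ham_zero_field, simp add: left_diff_distrib sum_subtractf)
  qed
  have "AE h in field_law N eps. \<forall>\<sigma>\<in>configs N. \<forall>\<tau>\<in>configs N. \<sigma> \<noteq> \<tau> \<longrightarrow> Ham N s h \<sigma> \<noteq> Ham N s h \<tau>"
    by (intro AE_finite_allI finite_configs AE_impI no_tie)
  then show ?thesis
    unfolding inj_on_def by (rule eventually_mono) blast
qed

lemma Ham_flip_le:
  assumes on_A: "\<And>w. w \<in> A \<Longrightarrow> \<sigma> w = 1 \<and> \<tau> w = -1"
    and interior: "\<And>w z. w \<in> A \<Longrightarrow> z \<in> bdry (Lambda N) \<Longrightarrow> \<not> nn w z"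
    and outer: "\<And>w z. w \<in> A \<Longrightarrow> z \<in> Lambda N - A \<Longrightarrow> nn w z \<Longrightarrow> \<sigma> z \<le> \<tau> z"
    and le: "\<And>w. w \<in> A \<Longrightarrow> f w \<le> f' w"
  shows "Ham N s f (\<lambda>w. if w \<in> A then -1 else \<sigma> w) + Ham N s' f' (\<lambda>w. if w \<in> A then 1 else \<tau> w)
    \<le> Ham N s f \<sigma> + Ham N s' f' \<tau>"
proof (rule Ham_add_le)
  fix u v assume "u \<in> Lambda N" "v \<in> Lambda N" "nn u v"
  then show "\<sigma> u * \<sigma> v + \<tau> u * \<tau> v
      \<le> (if u \<in> A then -1 else \<sigma> u) * (if v \<in> A then -1 else \<sigma> v)
       + (if u \<in> A then 1 else \<tau> u) * (if v \<in> A then 1 else \<tau> v)"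
    using on_A outer[of u v] outer[of v u] nn_sym by auto
qed (use on_A interior le in auto)

lemma flip_region_touches_bdry:
  assumes gs: "ground_state N s f \<sigma>" and gs': "ground_state N s' f' \<tau>"
    and inj: "inj_on (Ham N s f) (configs N)"
    and "A \<subseteq> Lambda N" and "A \<noteq> {}"
    and on_A: "\<And>w. w \<in> A \<Longrightarrow> \<sigma> w = 1 \<and> \<tau> w = -1"
    and outer: "\<And>w z. w \<in> A \<Longrightarrow> z \<in> Lambda N - A \<Longrightarrow> nn w z \<Longrightarrow> \<sigma> z \<le> \<tau> z"
    and le: "\<And>w. w \<in> A \<Longrightarrow> f w \<le> f' w"
  shows "\<exists>w\<in>A. \<exists>z\<in>bdry (Lambda N). nn w z"
proof (rule ccontr)
  assume "\<not> (\<exists>w\<in>A. \<exists>z\<in>bdry (Lambda N). nn w z)"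
  then have interior: "\<And>w z. w \<in> A \<Longrightarrow> z \<in> bdry (Lambda N) \<Longrightarrow> \<not> nn w z"
    by blast
  define \<sigma>\<^sub>A where "\<sigma>\<^sub>A = (\<lambda>w. if w \<in> A then -1 else \<sigma> w)"
  define \<tau>\<^sub>A where "\<tau>\<^sub>A = (\<lambda>w. if w \<in> A then 1 else \<tau> w)"
  have "\<sigma> \<in> configs N" "\<tau> \<in> configs N"
    using gs gs' unfolding ground_state_def by auto
  then have \<sigma>\<^sub>A: "\<sigma>\<^sub>A \<in> configs N" and \<tau>\<^sub>A: "\<tau>\<^sub>A \<in> configs N"
    using \<open>A \<subseteq> Lambda N\<close> unfolding configs_def \<sigma>\<^sub>A_def \<tau>\<^sub>A_def by auto
  have "Ham N s f \<sigma>\<^sub>A + Ham N s' f' \<tau>\<^sub>A \<le> Ham N s f \<sigma> + Ham N s' f' \<tau>"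
    unfolding \<sigma>\<^sub>A_def \<tau>\<^sub>A_def
    by (rule Ham_flip_le[OF on_A interior outer le])
  moreover have "Ham N s f \<sigma> \<le> Ham N s f \<sigma>\<^sub>A" and "Ham N s' f' \<tau> \<le> Ham N s' f' \<tau>\<^sub>A"
    using gs gs' \<sigma>\<^sub>A \<tau>\<^sub>A unfolding ground_state_def by auto
  ultimately have "Ham N s f \<sigma>\<^sub>A = Ham N s f \<sigma>"
    by linarith
  with inj \<sigma>\<^sub>A \<open>\<sigma> \<in> configs N\<close> have "\<sigma>\<^sub>A = \<sigma>"
    by (meson inj_onD)
  moreover obtain w where "w \<in> A"
    using \<open>A \<noteq> {}\<close> by blast
  then have "\<sigma>\<^sub>A w = -1" and "\<sigma> w = 1"
    using on_A unfolding \<sigma>\<^sub>A_def by auto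
  ultimately show False
    by simp
qed

definition walk :: "site set \<Rightarrow> site \<Rightarrow> site \<Rightarrow> site list \<Rightarrow> bool" where
  "walk D v w p \<longleftrightarrow> p \<noteq> [] \<and> hd p = v \<and> last p = w \<and> set p \<subseteq> D
     \<and> (\<forall>i. Suc i < length p \<longrightarrow> nn (p ! i) (p ! Suc i))"

definition cluster :: "site set \<Rightarrow> site \<Rightarrow> site set" where
  "cluster D v = {w. \<exists>p. walk D v w p}"

lemma walk_snoc:
  assumes "walk D v u p" and "z \<in> D" and "nn u z"
  shows "walk D v z (p @ [z])"
  unfolding walk_def
proof (intro conjI allI impI)
  fix i assume i: "Suc i < length (p @ [z])"
  show "nn ((p @ [z]) ! i) ((p @ [z]) ! Suc i)"
  proof (cases "Suc i < length p")
    case True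
    then show ?thesis using assms(1) unfolding walk_def by (auto simp: nth_append)
  next
    case False
    with i have "Suc i = length p" by simp
    moreover from this have "p ! i = u"
      using assms(1) unfolding walk_def by (metis diff_Suc_1 last_conv_nth)
    ultimately show ?thesis using assms(3) by (simp add: nth_append)
  qed
qed (use assms in \<open>auto simp: walk_def\<close>)

lemma self_in_cluster: "v \<in> D \<Longrightarrow> v \<in> cluster D v"
  unfolding cluster_def walk_def by (intro CollectI exI[of _ "[v]"]) simp

lemma cluster_subset: "cluster D v \<subseteq> D"
  unfolding cluster_def walk_def by (auto dest: last_in_set)

lemma cluster_closed: "w \<in> cluster D v \<Longrightarrow> z \<in> D \<Longrightarrow> nn w z \<Longrightarrow> z \<in> cluster D v"
  unfolding cluster_def using walk_snoc by blast

lemma path_to_bdry_if_cluster_touches: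
  assumes "w \<in> cluster S v" and "z \<in> bdry A" and "nn w z"
  shows "\<exists>p. path_to_bdry A S v p"
proof -
  obtain p where "walk S v w p"
    using assms(1) unfolding cluster_def by blast
  with assms(2,3) show ?thesis
    unfolding path_to_bdry_def walk_def by blast
qed

lemma common_disagreement_path_to_bdry:
  assumes x: "\<forall>v\<in>Lambda N. x v \<ge> 0"
    and gsp: "ground_state N 1 g sp" and gsm: "ground_state N (-1) g sm"
    and gcp: "ground_state N 1 (\<lambda>v. g v + x v) cp"
    and gcm: "ground_state N (-1) (\<lambda>v. g v + x v) cm"
    and inj_plus: "inj_on (Ham N 1 g) (configs N)" and inj_minus: "inj_on (Ham N (-1) g) (configs N)"
    and v: "v \<in> disagree N sp sm \<inter> disagree N cp cm"
  shows "\<exists>p. path_to_bdry (Lambda N) (disagree N sp sm \<inter> disagree N cp cm) v p"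
proof -
  define D where "D = disagree N sp sm \<inter> disagree N cp cm"
  define A where "A = cluster D v"
  have D: "w \<in> D \<longleftrightarrow> w \<in> Lambda N \<and> sp w = 1 \<and> sm w = -1 \<and> cp w = 1 \<and> cm w = -1" for w
    unfolding D_def disagree_def by auto
  have "A \<subseteq> D"
    unfolding A_def by (rule cluster_subset)
  have configs: "sp \<in> configs N" "sm \<in> configs N" "cp \<in> configs N" "cm \<in> configs N"
    using gsp gsm gcp gcm unfolding ground_state_def by auto
  have mono: "sp w \<le> cp w" "sm w \<le> cm w" for w
    using ground_state_le[OF gsp gcp _ inj_plus] ground_state_le[OF gsm gcm _ inj_minus] x by auto
  have outer: "sp z \<le> cm z" if "w \<in> A" "z \<in> Lambda N - A" "nn w z" for w z
  proof (rule ccontr)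
    assume "\<not> sp z \<le> cm z"
    with that(2) have "sp z = 1" "cm z = -1"
      using configs_values[OF configs(1)] configs_values[OF configs(4)] by fastforce+
    with that(2) have "z \<in> D"
      using configs_values[OF configs(2)] configs_values[OF configs(3)] mono[of z]
      unfolding D by fastforce
    with that show False
      using cluster_closed unfolding A_def by blast
  qed
  have "\<exists>w\<in>A. \<exists>z\<in>bdry (Lambda N). nn w z"
  proof (rule flip_region_touches_bdry[OF gsp gcm inj_plus _ _ _ outer])
    show "A \<subseteq> Lambda N" and "\<And>w. w \<in> A \<Longrightarrow> sp w = 1 \<and> cm w = -1"
      using \<open>A \<subseteq> D\<close> D by auto
    show "A \<noteq> {}"
      using self_in_cluster v unfolding A_def D_def by blast
  qed (use x \<open>A \<subseteq> D\<close> D in auto)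
  then show ?thesis
    using path_to_bdry_if_cluster_touches unfolding A_def D_def by blast
qed

theorem lemma2p5:
  fixes N :: nat and eps :: real and x :: "site \<Rightarrow> real"
  assumes "eps > 0" and "\<forall>v\<in>Lambda N. x v \<ge> 0"
  shows "AE h in field_law N eps.
    \<forall>sp sm cp cm.
      ground_state N 1 h sp \<and> ground_state N (-1) h sm \<and>
      ground_state N 1 (\<lambda>v. h v + x v) cp \<and> ground_state N (-1) (\<lambda>v. h v + x v) cm \<longrightarrow>
      (\<forall>v \<in> disagree N sp sm \<inter> disagree N cp cm.
         \<exists>p. path_to_bdry (Lambda N) (disagree N sp sm \<inter> disagree N cp cm) v p)"
  using AE_inj_on_Ham[OF assms(1), of N 1] AE_inj_on_Ham[OF assms(1), of N "-1"]
proof eventually_elim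
  case (elim h)
  then show ?case
    using common_disagreement_path_to_bdry[OF assms(2)] by blast
qed

end
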